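(* In the standing setting, let $k_1,k_2>0$, $\beta_{\min}\in(\beta_{\mathrm{crit}},1]$, $\beta:[0,\infty)\to[\beta_{\min},1]$ continuous, apply the relieved control law, and let $t_s>0$. If $\mathbf z_0\in\mathcal B:=\{\mathbf x\in\mathbb R^6:\rho\|\mathbf x\|<r\}$, then $\mathbf z_0\in\mathcal E$, and the closed-loop solution satisfies, for all $t\in[0,t_s]$, $$\|\mathbf f_a(t,\mathbf z_1(t))\|\le\sum_{j=1}^P\mu_j\psi_j(\|\mathbf z_0\|,t)\le\phi(\|\mathbf z_0\|),$$ where $$\psi_j(s,t)=\frac{\|\mathbf w_j(t)\|_1}{(\|\mathbf w_j(t)\|-\rho se^{-\theta t})^3}-\frac{\|\mathbf w_j(t)\|_1}{\|\mathbf w_j(t)\|^3}+\frac{\sqrt3\,\rho se^{-\theta t}}{(\|\mathbf w_j(t)\|-\rho se^{-\theta t})^3},\qquad \phi(s)=\max_{t\in[0,t_s]}\sum_{j=1}^P\mu_j\psi_j(s,t).$$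
   Context: Standing setting: Let $P\ge1$. For $j=1,\dots,P$ let $\mu_j>0$ and let $\mathbf r_j:[0,\infty)\to\mathbb R^3$ be continuously differentiable, with $\mathbf r_1\equiv\mathbf 0$. Let $\mathbf r^*:[0,\infty)\to\mathbb R^3$ be continuously differentiable (the target trajectory) with $\mathbf r^*(t)\neq\mathbf r_j(t)$ for all $t\ge0$ and all $j$, and set $\mathbf w_j(t):=\mathbf r_j(t)-\mathbf r^*(t)$. For $t\ge0$ and $\mathbf z_1\in\mathbb R^3$ with $\mathbf z_1\ne\mathbf w_j(t)$ for all $j$, define $$\mathbf f_a(t,\mathbf z_1)=\sum_{j=1}^P\mu_j\left(\frac{\mathbf w_j(t)-\mathbf z_1}{\|\mathbf w_j(t)-\mathbf z_1\|^3}-\frac{\mathbf w_j(t)}{\|\mathbf w_j(t)\|^3}\right).$$ The controlled error dynamics are $\dot{\mathbf z}_1(t)=\mathbf z_2(t)$, $\dot{\mathbf z}_2(t)=\mathbf f_a(t,\mathbf z_1(t))+\mathbf u(t)$, with state $\mathbf z=(\mathbf z_1,\mathbf z_2)\in\mathbb R^6$, control $\mathbf u(t)\in\mathbb R^3$, initial time $0$ and $\mathbf z_0:=\mathbf z(0)$, defined on $\mathcal D(t)=\{(\mathbf x,\mathbf y)\in\mathbb R^6:\mathbf x\neq\mathbf w_j(t),\ j=1,\dots,P\}$. $\|\cdot\|$ is the Euclidean norm and $\|\cdot\|_1$ the $\ell_1$ norm; $\lambda_{\min},\lambda_{\max}$ denote smallest/largest eigenvalues. Relieved control law: $\mathbf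 u(t)=-\beta(t)\big[(1+k_1k_2)\mathbf z_1(t)+(k_1+k_2)\mathbf z_2(t)\big]-\mathbf f_a(t,\mathbf z_1(t))$. Critical relief: $\beta_{\mathrm{crit}}=\dfrac{k_1^4+2k_1k_2+1-2\sqrt{(k_1k_2+1)(k_1k_2+k_1^4)}}{(k_1^2-1)^2}$ if $k_1\ne1$, and $\beta_{\mathrm{crit}}=\dfrac{1}{1+k_2}$ if $k_1=1$. Matrices and constants: $\mathbf X=\begin{bmatrix}(1+k_1^2)\mathbf I_3&k_1\mathbf I_3\\k_1\mathbf I_3&\mathbf I_3\end{bmatrix}$, $\rho=\sqrt{\lambda_{\max}(\mathbf X)/\lambda_{\min}(\mathbf X)}$; $\mathbf U(\beta)=\begin{bmatrix}2(k_1+k_1^2k_2)\beta\,\mathbf I_3 & ((k_1^2+2k_1k_2+1)\beta-k_1^2-1)\mathbf I_3\\ ((k_1^2+2k_1k_2+1)\beta-k_1^2-1)\mathbf I_3 & 2((k_1+k_2)\beta-k_1)\mathbf I_3\end{bmatrix}$; $\theta=\dfrac{\lambda_{\min}(\mathbf U(\beta_{\min}))}{2\lambda_{\max}(\mathbf X)}$; $r=\min_{j=1,\dots,P,\ t\in[0,t_s]}\|\mathbf w_j(t)\|$; $\mathcal E=\{\mathbf y\in\mathbb R^6:\mathbf y^T\mathbf X\mathbf y<\lambda_{\min}(\mathbf X)r^2\}$. *)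

theory Defs
  imports "HOL-Analysis.Analysis"
begin

text \<open>State space R^6 is rendered as real^(3+3): first block z1, second block z2.\<close>

definition stack :: "real^3 \<Rightarrow> real^3 \<Rightarrow> real^(3+3)" where
  "stack x y = (\<chi> i. case i of Inl a \<Rightarrow> x $ a | Inr b \<Rightarrow> y $ b)"

definition blk :: "real \<Rightarrow> real \<Rightarrow> real \<Rightarrow> real \<Rightarrow> real^(3+3)^(3+3)" where
  "blk a b c d = (\<chi> i j. case (i, j) of
      (Inl p, Inl q) \<Rightarrow> (if p = q then a else 0)
    | (Inl p, Inr q) \<Rightarrow> (if p = q then b else 0)
    | (Inr p, Inl q) \<Rightarrow> (if p = q then c else 0)
    | (Inr p, Inr q) \<Rightarrow> (if p = q then d else 0))"

definition eigvals :: "real^'n^'n \<Rightarrow> real set" where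
  "eigvals M = {l. \<exists>v. v \<noteq> 0 \<and> M *v v = l *\<^sub>R v}"

definition lmin :: "real^'n^'n \<Rightarrow> real" where
  "lmin M = Min (eigvals M)"

definition lmax :: "real^'n^'n \<Rightarrow> real" where
  "lmax M = Max (eigvals M)"

definition norm1 :: "real^'n \<Rightarrow> real" where
  "norm1 x = (\<Sum>i\<in>UNIV. \<bar>x $ i\<bar>)"

definition fa :: "nat \<Rightarrow> (nat \<Rightarrow> real) \<Rightarrow> (nat \<Rightarrow> real \<Rightarrow> real^3) \<Rightarrow> real \<Rightarrow> real^3 \<Rightarrow> real^3" where
  "fa P \<mu> w t z = (\<Sum>j=1..P. \<mu> j *\<^sub>R
       ((1 / norm (w j t - z) ^ 3) *\<^sub>R (w j t - z) - (1 / norm (w j t) ^ 3) *\<^sub>R w j t))"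

definition beta_crit :: "real \<Rightarrow> real \<Rightarrow> real" where
  "beta_crit k1 k2 = (if k1 \<noteq> 1 then
     (k1^4 + 2*k1*k2 + 1 - 2 * sqrt ((k1*k2 + 1) * (k1*k2 + k1^4))) / (k1^2 - 1)^2
   else 1 / (1 + k2))"

definition Xmat :: "real \<Rightarrow> real^(3+3)^(3+3)" where
  "Xmat k1 = blk (1 + k1^2) k1 k1 1"

definition Umat :: "real \<Rightarrow> real \<Rightarrow> real \<Rightarrow> real^(3+3)^(3+3)" where
  "Umat k1 k2 b = blk (2 * (k1 + k1^2 * k2) * b)
                      ((k1^2 + 2*k1*k2 + 1) * b - k1^2 - 1)
                      ((k1^2 + 2*k1*k2 + 1) * b - k1^2 - 1)
                      (2 * ((k1 + k2) * b - k1))"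

definition psi :: "(nat \<Rightarrow> real \<Rightarrow> real^3) \<Rightarrow> real \<Rightarrow> real \<Rightarrow> nat \<Rightarrow> real \<Rightarrow> real \<Rightarrow> real" where
  "psi w \<rho> \<theta> j s t =
     norm1 (w j t) / (norm (w j t) - \<rho> * s * exp (- \<theta> * t)) ^ 3
     - norm1 (w j t) / norm (w j t) ^ 3
     + sqrt 3 * \<rho> * s * exp (- \<theta> * t) / (norm (w j t) - \<rho> * s * exp (- \<theta> * t)) ^ 3"

text \<open>phi(s) = max over t in [0,ts] of the sum (rendered as the supremum, which is attained).\<close>
definition phi :: "nat \<Rightarrow> (nat \<Rightarrow> real) \<Rightarrow> (nat \<Rightarrow> real \<Rightarrow> real^3) \<Rightarrow> real \<Rightarrow> real \<Rightarrow> real \<Rightarrow> real \<Rightarrow> real" where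
  "phi P \<mu> w \<rho> \<theta> ts s = (SUP t\<in>{0..ts}. (\<Sum>j=1..P. \<mu> j * psi w \<rho> \<theta> j s t))"

end

theory Submission
  imports Defs
begin

(* The quadratic form V(z) = z' X z = |z1|^2 + |k1 z1 + z2|^2 is a Lyapunov function of the
   relieved closed loop: the control cancels f_a, and along solutions V' = - z' U(beta(t)) z.
   Since beta_min > beta_crit, U(beta_min) is positive definite, and the form of U(beta) is
   affine in beta, so it dominates 2 theta V for every beta(t) in [beta_min, 1]. Hence V decays
   like exp(-2 theta t) and |z1(t)| <= rho |z0| exp(-theta t) < r stays away from every w_j.
   Each term of f_a is then bounded via the triangle inequality and the convexity of 1/x^3,
   which gives psi_j, and the continuous sum of the psi_j is bounded by its maximum phi. *)

section \<open>Block vectors and block matrices\<close>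

lemma sum_UNIV_sum:
  "sum f (UNIV :: ('a::finite + 'b::finite) set) = (\<Sum>p\<in>UNIV. f (Inl p)) + (\<Sum>q\<in>UNIV. f (Inr q))"
  using sum.Plus[of "UNIV :: 'a set" "UNIV :: 'b set" f] by (simp add: comp_def)

lemma stack_nth [simp]: "stack x y $ Inl p = x $ p" "stack x y $ Inr q = y $ q"
  by (simp_all add: stack_def)

lemma stack_eq_iff [simp]: "stack x y = stack x' y' \<longleftrightarrow> x = x' \<and> y = y'"
  by (simp add: vec_eq_iff split_sum_all)

lemma stack_cases: obtains x y where "v = stack x y"
proof
  show "v = stack (\<chi> p. v $ Inl p) (\<chi> q. v $ Inr q)"
    by (simp add: vec_eq_iff split_sum_all)
qed

lemma stack_zero [simp]: "stack 0 0 = 0"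
  by (simp add: vec_eq_iff split_sum_all)

lemma scaleR_stack: "c *\<^sub>R stack x y = stack (c *\<^sub>R x) (c *\<^sub>R y)"
  by (simp add: vec_eq_iff split_sum_all)

lemma inner_stack: "stack x y \<bullet> stack x' y' = x \<bullet> x' + y \<bullet> y'"
  by (simp add: inner_vec_def sum_UNIV_sum)

lemma blk_mult_stack:
  "blk a b c d *v stack x y = stack (a *\<^sub>R x + b *\<^sub>R y) (c *\<^sub>R x + d *\<^sub>R y)"
  by (simp add: vec_eq_iff split_sum_all matrix_vector_mult_def blk_def sum_UNIV_sum
      if_distrib [of "\<lambda>u. u * _"] cong: if_cong)

lemma inner_blk_mult_stack:
  "stack x y \<bullet> (blk a b b d *v stack x y) = a * (x \<bullet> x) + 2 * b * (x \<bullet> y) + d * (y \<bullet> y)"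
  by (simp add: blk_mult_stack inner_stack inner_add_right inner_commute algebra_simps)

text \<open>The eigenvalues of \<open>[[a, b], [b, d]]\<close>, whose Kronecker product with the \<open>3 \<times> 3\<close>
  identity is \<open>blk a b b d\<close>.\<close>
definition eig2_min :: "real \<Rightarrow> real \<Rightarrow> real \<Rightarrow> real" where
  "eig2_min a b d = (a + d) / 2 - sqrt (((a - d) / 2)^2 + b^2)"

definition eig2_max :: "real \<Rightarrow> real \<Rightarrow> real \<Rightarrow> real" where
  "eig2_max a b d = (a + d) / 2 + sqrt (((a - d) / 2)^2 + b^2)"

lemma char_eq_iff_eig2:
  "(a - l) * (d - l) = b^2 \<longleftrightarrow> l = eig2_min a b d \<or> l = eig2_max a b d"
proof -
  define S where "S = sqrt (((a - d) / 2)^2 + b^2)"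
  have "S^2 = ((a - d) / 2)^2 + b^2"
    unfolding S_def by simp
  then have "(a - l) * (d - l) - b^2 = (l - (a + d) / 2)^2 - S^2"
    by (simp add: power2_eq_square field_simps)
  then have "(a - l) * (d - l) = b^2 \<longleftrightarrow> (l - (a + d) / 2)^2 = S^2"
    by linarith
  also have "\<dots> \<longleftrightarrow> l - (a + d) / 2 = S \<or> l - (a + d) / 2 = - S"
    by (rule power2_eq_iff)
  finally show ?thesis
    unfolding eig2_min_def eig2_max_def S_def[symmetric] by linarith
qed

lemma eig2_min_le_eig2_max: "eig2_min a b d \<le> eig2_max a b d"
  by (simp add: eig2_min_def eig2_max_def)

lemma eig2_min_le_diag: "eig2_min a b d \<le> a" "eig2_min a b d \<le> d"
  and eig2_max_ge_diag: "a \<le> eig2_max a b d" "d \<le> eig2_max a b d"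
proof -
  define S where "S = sqrt (((a - d) / 2)^2 + b^2)"
  have "\<bar>(a - d) / 2\<bar> \<le> S"
    unfolding S_def by (metis real_sqrt_abs real_sqrt_le_mono le_add_same_cancel1 zero_le_power2)
  then show "eig2_min a b d \<le> a" "eig2_min a b d \<le> d" "a \<le> eig2_max a b d" "d \<le> eig2_max a b d"
    unfolding eig2_min_def eig2_max_def S_def[symmetric] by (auto simp: abs_le_iff field_simps)
qed

lemma eig2_min_pos:
  assumes "0 < a" "b^2 < a * d"
  shows "0 < eig2_min a b d"
proof -
  have "0 < a * d"
    using assms(2) zero_le_power2[of b] by linarith
  then have "0 < d"
    using \<open>0 < a\<close> by (rule zero_less_mult_pos)
  have "((a + d) / 2)^2 - ((a - d) / 2)^2 = a * d"
    by (simp add: power2_eq_square field_simps)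
  then have "sqrt (((a - d) / 2)^2 + b^2) < sqrt (((a + d) / 2)^2)"
    using assms by (intro real_sqrt_less_mono) linarith
  with \<open>0 < a\<close> \<open>0 < d\<close> show ?thesis
    unfolding eig2_min_def by simp
qed

lemma eigvals_blk_iff: "l \<in> eigvals (blk a b b d) \<longleftrightarrow> (a - l) * (d - l) = b^2"
proof
  assume "l \<in> eigvals (blk a b b d)"
  then obtain v where "v \<noteq> 0" and eig: "blk a b b d *v v = l *\<^sub>R v"
    by (auto simp: eigvals_def)
  obtain x y where v: "v = stack x y"
    by (rule stack_cases)
  from eig have ex: "a *\<^sub>R x + b *\<^sub>R y = l *\<^sub>R x" and ey: "b *\<^sub>R x + d *\<^sub>R y = l *\<^sub>R y"
    by (simp_all add: v blk_mult_stack scaleR_stack)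
  have "((a - l) * (d - l) - b^2) *\<^sub>R x = (d - l) *\<^sub>R (a *\<^sub>R x + b *\<^sub>R y - l *\<^sub>R x) - b *\<^sub>R (b *\<^sub>R x + d *\<^sub>R y - l *\<^sub>R y)"
    and "((a - l) * (d - l) - b^2) *\<^sub>R y = (a - l) *\<^sub>R (b *\<^sub>R x + d *\<^sub>R y - l *\<^sub>R y) - b *\<^sub>R (a *\<^sub>R x + b *\<^sub>R y - l *\<^sub>R x)"
    by (simp_all add: algebra_simps power2_eq_square)
  with ex ey have "((a - l) * (d - l) - b^2) *\<^sub>R x = 0" "((a - l) * (d - l) - b^2) *\<^sub>R y = 0"
    by simp_all
  moreover have "x \<noteq> 0 \<or> y \<noteq> 0"
    using \<open>v \<noteq> 0\<close> v by auto
  ultimately show "(a - l) * (d - l) = b^2"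
    by auto
next
  assume char: "(a - l) * (d - l) = b^2"
  obtain p q :: real where "p \<noteq> 0 \<or> q \<noteq> 0" "a * p + b * q = l * p" "b * p + d * q = l * q"
  proof (cases "b = 0")
    case True
    with char have "a = l \<or> d = l"
      by simp
    then show ?thesis
      using True that[of 1 0] that[of 0 1] by auto
  next
    case False
    from char have "b * b + d * (l - a) = l * (l - a)"
      by (simp add: algebra_simps power2_eq_square)
    with False show ?thesis
      by (intro that[of b "l - a"]) (auto simp: algebra_simps)
  qed
  then have "stack (p *\<^sub>R 1) (q *\<^sub>R 1) \<noteq> 0"
    and "blk a b b d *v stack (p *\<^sub>R 1) (q *\<^sub>R 1) = l *\<^sub>R stack (p *\<^sub>R 1) (q *\<^sub>R (1 :: real^3))"
    by (auto simp: blk_mult_stack scaleR_stack scaleR_add_left [symmetric] vec_eq_iff split_sum_all)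
  then show "l \<in> eigvals (blk a b b d)"
    unfolding eigvals_def by blast
qed

lemma eigvals_blk: "eigvals (blk a b b d) = {eig2_min a b d, eig2_max a b d}"
  by (auto simp: eigvals_blk_iff char_eq_iff_eig2)

lemma lmin_blk: "lmin (blk a b b d) = eig2_min a b d"
  using eig2_min_le_eig2_max[of a b d] by (simp add: lmin_def eigvals_blk min_def)

lemma lmax_blk: "lmax (blk a b b d) = eig2_max a b d"
  using eig2_min_le_eig2_max[of a b d] by (simp add: lmax_def eigvals_blk max_def)

lemma psd2_trace_product_nonneg:
  fixes p q b A B C :: real
  assumes "0 \<le> p" "0 \<le> q" "b^2 \<le> p * q" "0 \<le> A" "0 \<le> C" "B^2 \<le> A * C"
  shows "0 \<le> p * A + 2 * b * B + q * C"
proof -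
  have "b^2 * B^2 \<le> (p * q) * (A * C)"
    by (rule mult_mono) (use assms in auto)
  then have "(2 * b * B)^2 \<le> 4 * ((p * q) * (A * C))"
    by (simp add: power_mult_distrib)
  also have "\<dots> \<le> (p * A + q * C)^2"
  proof -
    have "(p * A + q * C)^2 = 4 * ((p * q) * (A * C)) + (p * A - q * C)^2"
      by (simp add: power2_eq_square algebra_simps)
    then show ?thesis
      by simp
  qed
  finally have "\<bar>2 * b * B\<bar> \<le> \<bar>p * A + q * C\<bar>"
    by (simp only: abs_le_square_iff)
  with assms show ?thesis
    by simp
qed

lemma eig2_min_mult_le:
  assumes "0 \<le> A" "0 \<le> C" "B^2 \<le> A * C"
  shows "eig2_min a b d * (A + C) \<le> a * A + 2 * b * B + d * C"
proof -
  have "(a - eig2_min a b d) * (d - eig2_min a b d) = b^2"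
    by (simp add: char_eq_iff_eig2)
  then have "0 \<le> (a - eig2_min a b d) * A + 2 * b * B + (d - eig2_min a b d) * C"
    using assms eig2_min_le_diag[where a=a and b=b and d=d] by (intro psd2_trace_product_nonneg) auto
  then show ?thesis
    by (simp add: algebra_simps)
qed

lemma eig2_max_mult_ge:
  assumes "0 \<le> A" "0 \<le> C" "B^2 \<le> A * C"
  shows "a * A + 2 * b * B + d * C \<le> eig2_max a b d * (A + C)"
proof -
  have "(eig2_max a b d - a) * (eig2_max a b d - d) = (- b)^2"
    using char_eq_iff_eig2[of a "eig2_max a b d" d b] by (simp add: algebra_simps)
  then have "0 \<le> (eig2_max a b d - a) * A + 2 * (- b) * B + (eig2_max a b d - d) * C"
    using assms eig2_max_ge_diag[where a=a and b=b and d=d] by (intro psd2_trace_product_nonneg) auto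
  then show ?thesis
    by (simp add: algebra_simps)
qed

lemma lmin_blk_le_quadratic_form: "lmin (blk a b b d) * norm v^2 \<le> v \<bullet> (blk a b b d *v v)"
proof -
  obtain x y where "v = stack x y"
    by (rule stack_cases)
  moreover have "eig2_min a b d * (x \<bullet> x + y \<bullet> y) \<le> a * (x \<bullet> x) + 2 * b * (x \<bullet> y) + d * (y \<bullet> y)"
    by (intro eig2_min_mult_le Cauchy_Schwarz_ineq) auto
  ultimately show ?thesis
    by (simp add: lmin_blk inner_blk_mult_stack power2_norm_eq_inner inner_stack)
qed

lemma quadratic_form_le_lmax_blk: "v \<bullet> (blk a b b d *v v) \<le> lmax (blk a b b d) * norm v^2"
proof -
  obtain x y where "v = stack x y"
    by (rule stack_cases)
  moreover have "a * (x \<bullet> x) + 2 * b * (x \<bullet> y) + d * (y \<bullet> y) \<le> eig2_max a b d * (x \<bullet> x + y \<bullet> y)"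
    by (intro eig2_max_mult_ge Cauchy_Schwarz_ineq) auto
  ultimately show ?thesis
    by (simp add: lmax_blk inner_blk_mult_stack power2_norm_eq_inner inner_stack)
qed

section \<open>The Lyapunov matrix and the relief condition\<close>

lemma Xmat_form: "stack x y \<bullet> (Xmat k1 *v stack x y) = norm x^2 + norm (k1 *\<^sub>R x + y)^2"
  unfolding power2_norm_eq_inner
  by (simp add: Xmat_def inner_blk_mult_stack inner_add_left inner_add_right inner_commute
      power2_eq_square algebra_simps)

lemma lmin_Xmat_pos: "0 < lmin (Xmat k1)"
  unfolding Xmat_def lmin_blk by (rule eig2_min_pos) (auto simp: add_pos_nonneg)

lemma lmin_Xmat_le_one: "lmin (Xmat k1) \<le> 1"
  unfolding Xmat_def lmin_blk by (rule eig2_min_le_diag)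

lemma one_le_lmax_Xmat: "1 \<le> lmax (Xmat k1)"
  unfolding Xmat_def lmax_blk by (rule eig2_max_ge_diag)

lemma Xmat_form_less:
  assumes "sqrt (lmax (Xmat k1) / lmin (Xmat k1)) * norm v < r"
  shows "v \<bullet> (Xmat k1 *v v) < lmin (Xmat k1) * r^2"
proof -
  have pos: "0 < lmin (Xmat k1)" "0 \<le> lmax (Xmat k1) / lmin (Xmat k1)"
    using lmin_Xmat_pos[of k1] one_le_lmax_Xmat[of k1] by auto
  have "v \<bullet> (Xmat k1 *v v) \<le> lmax (Xmat k1) * norm v^2"
    unfolding Xmat_def by (rule quadratic_form_le_lmax_blk)
  also have "\<dots> = lmin (Xmat k1) * (sqrt (lmax (Xmat k1) / lmin (Xmat k1)) * norm v)^2"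
    using pos by (simp add: power_mult_distrib)
  also have "\<dots> < lmin (Xmat k1) * r^2"
    using assms pos by (intro mult_strict_left_mono power_strict_mono) auto
  finally show ?thesis .
qed

definition Umat_det :: "real \<Rightarrow> real \<Rightarrow> real \<Rightarrow> real" where
  "Umat_det k1 k2 \<beta> = (2 * (k1 + k1^2 * k2) * \<beta>) * (2 * ((k1 + k2) * \<beta> - k1))
                      - ((k1^2 + 2*k1*k2 + 1) * \<beta> - k1^2 - 1)^2"

lemma Umat_det_poly:
  "Umat_det k1 k2 \<beta> = 2 * (k1^4 + 2*k1*k2 + 1) * \<beta> - (k1^2 - 1)^2 * \<beta>^2 - (1 + k1^2)^2"
  by (simp add: Umat_det_def power2_eq_square power4_eq_xxxx algebra_simps)

lemma beta_crit_root:
  assumes "0 < k1" "0 < k2" "k1 \<noteq> 1"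
  shows "0 \<le> beta_crit k1 k2" "Umat_det k1 k2 (beta_crit k1 k2) = 0"
proof -
  define E N K S where "E = (k1^2 - 1)^2" and "N = k1^4 + 2*k1*k2 + 1" and "K = (1 + k1^2)^2"
    and "S = sqrt ((k1*k2 + 1) * (k1*k2 + k1^4))"
  have "k1^2 \<noteq> 1"
    using assms by (simp add: power2_eq_1_iff)
  then have "0 < E"
    by (simp add: E_def)
  have "0 < N"
    using assms by (simp add: N_def add_pos_nonneg)
  have "S^2 = (k1*k2 + 1) * (k1*k2 + k1^4)"
    using assms unfolding S_def by (intro real_sqrt_pow2) (simp add: add_nonneg_nonneg)
  moreover have "K * E = (k1^4 - 1)^2"
    unfolding K_def E_def power_mult_distrib[symmetric] by (simp add: power2_eq_square power4_eq_xxxx algebra_simps)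
  ultimately have S2: "(2 * S)^2 = N^2 - K * E"
    unfolding N_def by (simp add: power2_eq_square algebra_simps)
  then have "(2 * S)^2 \<le> N^2"
    using \<open>0 < E\<close> by (simp add: K_def)
  with \<open>0 < N\<close> have "2 * S \<le> N"
    using power2_le_imp_le[of "2 * S" N] by simp
  have bc: "beta_crit k1 k2 = (N - 2 * S) / E"
    using assms by (simp add: beta_crit_def E_def N_def S_def)
  with \<open>2 * S \<le> N\<close> \<open>0 < E\<close> show "0 \<le> beta_crit k1 k2"
    by simp
  have D: "Umat_det k1 k2 x = 2 * N * x - E * x^2 - K" for x
    unfolding Umat_det_poly E_def N_def K_def by simp
  have "E * Umat_det k1 k2 ((N - 2 * S) / E) = 2 * N * (N - 2 * S) - (N - 2 * S)^2 - K * E"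
    unfolding D using \<open>0 < E\<close> by (simp add: power2_eq_square field_simps)
  also have "\<dots> = 0"
    using S2 by (simp add: power2_eq_square algebra_simps)
  finally show "Umat_det k1 k2 (beta_crit k1 k2) = 0"
    using \<open>0 < E\<close> bc by simp
qed

lemma beta_crit_nonneg:
  assumes "0 < k1" "0 < k2"
  shows "0 \<le> beta_crit k1 k2"
  using assms beta_crit_root(1)[OF assms] by (cases "k1 = 1") (simp_all add: beta_crit_def)

text \<open>For \<open>k1 \<noteq> 1\<close> the determinant is a concave quadratic in \<open>\<beta>\<close> with smaller root
  \<open>beta_crit\<close>, and it is positive at \<open>\<beta> = 1\<close>; hence it is positive in between.\<close>
lemma Umat_det_pos:
  assumes "0 < k1" "0 < k2" "beta_crit k1 k2 < \<beta>" "\<beta> \<le> 1"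
  shows "0 < Umat_det k1 k2 \<beta>"
proof (cases "k1 = 1")
  case True
  with assms have "1 < (1 + k2) * \<beta>"
    by (simp add: beta_crit_def field_simps)
  with True show ?thesis
    by (simp add: Umat_det_poly algebra_simps)
next
  case False
  define bc E N K where "bc = beta_crit k1 k2" and "E = (k1^2 - 1)^2" and "N = k1^4 + 2*k1*k2 + 1"
    and "K = (1 + k1^2)^2"
  have D: "Umat_det k1 k2 x = 2 * N * x - E * x^2 - K" for x
    unfolding Umat_det_poly E_def N_def K_def by simp
  have interp: "(1 - bc) * Umat_det k1 k2 \<beta> = (\<beta> - bc) * Umat_det k1 k2 1 + (1 - \<beta>) * Umat_det k1 k2 bc
      + E * ((\<beta> - bc) * (1 - \<beta>) * (1 - bc))"
    unfolding D by (simp add: power2_eq_square algebra_simps)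
  have "Umat_det k1 k2 bc = 0"
    unfolding bc_def by (rule beta_crit_root(2)[OF assms(1,2) False])
  moreover have "0 < (\<beta> - bc) * Umat_det k1 k2 1"
    using assms by (simp add: bc_def Umat_det_def power2_eq_square algebra_simps)
  moreover have "0 \<le> E * ((\<beta> - bc) * (1 - \<beta>) * (1 - bc))"
    using assms unfolding bc_def E_def by (intro mult_nonneg_nonneg) auto
  ultimately have "0 < (1 - bc) * Umat_det k1 k2 \<beta>"
    unfolding interp by simp
  moreover have "bc < 1"
    using assms by (simp add: bc_def)
  ultimately show ?thesis
    by (simp add: zero_less_mult_iff)
qed

lemma lmin_Umat_pos:
  assumes "0 < k1" "0 < k2" "beta_crit k1 k2 < \<beta>" "\<beta> \<le> 1"
  shows "0 < lmin (Umat k1 k2 \<beta>)"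
proof -
  have "0 < \<beta>"
    using beta_crit_nonneg[OF assms(1,2)] assms(3) by linarith
  then show ?thesis
    using Umat_det_pos[OF assms] assms(1,2)
    unfolding Umat_def lmin_blk Umat_det_def by (intro eig2_min_pos) (auto simp: add_pos_nonneg)
qed

lemma lmin_Umat_le:
  assumes "0 \<le> k1" "0 \<le> k2" "\<beta> \<le> 1"
  shows "lmin (Umat k1 k2 \<beta>) \<le> 2 * k1" "lmin (Umat k1 k2 \<beta>) \<le> 2 * k2"
proof -
  define m where "m = lmin (Umat k1 k2 \<beta>)"
  have "m * (1 + k1^2) \<le> 2 * (k1 + k1^2 * k2) * \<beta> * 1 + 2 * ((k1^2 + 2*k1*k2 + 1) * \<beta> - k1^2 - 1) * (- k1)
      + 2 * ((k1 + k2) * \<beta> - k1) * k1^2"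
    unfolding m_def Umat_def lmin_blk by (rule eig2_min_mult_le) (simp_all add: power2_eq_square)
  also have "\<dots> = 2 * k1"
    by (simp add: power2_eq_square algebra_simps)
  finally have "m * (1 + k1^2) \<le> 2 * k1" .
  then show "m \<le> 2 * k1"
  proof (cases "m \<le> 0")
    case False
    then have "m * 1 \<le> m * (1 + k1^2)"
      by (intro mult_left_mono) auto
    with \<open>m * (1 + k1^2) \<le> 2 * k1\<close> show ?thesis
      by simp
  qed (use assms in simp)
  have "m \<le> 2 * ((k1 + k2) * \<beta> - k1)"
    unfolding m_def Umat_def lmin_blk by (rule eig2_min_le_diag)
  also have "\<dots> \<le> 2 * k2"
    using assms mult_left_mono[of \<beta> 1 "k1 + k2"] by simp
  finally show "m \<le> 2 * k2" .
qed

lemma Umat_form: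
  "stack x y \<bullet> (Umat k1 k2 \<beta> *v stack x y)
    = \<beta> * (2 * (k1 + k1^2 * k2) * norm x^2 + 2 * (k1^2 + 2*k1*k2 + 1) * (x \<bullet> y) + 2 * (k1 + k2) * norm y^2)
      - (2 * (k1^2 + 1) * (x \<bullet> y) + 2 * k1 * norm y^2)"
  by (simp add: Umat_def inner_blk_mult_stack power2_norm_eq_inner algebra_simps)

lemma Umat_one_form:
  "stack x y \<bullet> (Umat k1 k2 1 *v stack x y) = 2 * k1 * norm x^2 + 2 * k2 * norm (k1 *\<^sub>R x + y)^2"
  unfolding Umat_form power2_norm_eq_inner
  by (simp add: inner_add_left inner_add_right inner_commute power2_eq_square algebra_simps)

text \<open>The form of \<open>Umat k1 k2 \<beta>\<close> is affine in \<open>\<beta>\<close>, so it suffices to check \<open>\<beta> = \<beta>min\<close>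
  (Rayleigh bounds) and \<open>\<beta> = 1\<close> (where \<open>lmin (Umat k1 k2 \<beta>min) \<le> 2 k1, 2 k2\<close> is what is needed).\<close>
lemma Umat_form_ge_Xmat_form:
  assumes "0 < k1" "0 < k2" "beta_crit k1 k2 < \<beta>min" "\<beta>min \<le> \<beta>" "\<beta> \<le> 1"
  shows "lmin (Umat k1 k2 \<beta>min) / lmax (Xmat k1) * (v \<bullet> (Xmat k1 *v v)) \<le> v \<bullet> (Umat k1 k2 \<beta> *v v)"
proof -
  obtain x y where v: "v = stack x y"
    by (rule stack_cases)
  define c where "c = lmin (Umat k1 k2 \<beta>min) / lmax (Xmat k1)"
  define V where "V = v \<bullet> (Xmat k1 *v v)"
  define Q1 Q0 where "Q1 = 2 * (k1 + k1^2 * k2) * norm x^2 + 2 * (k1^2 + 2*k1*k2 + 1) * (x \<bullet> y) + 2 * (k1 + k2) * norm y^2"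
    and "Q0 = 2 * (k1^2 + 1) * (x \<bullet> y) + 2 * k1 * norm y^2"
  have Umin: "0 < lmin (Umat k1 k2 \<beta>min)"
    using assms by (intro lmin_Umat_pos) auto
  have "0 < lmax (Xmat k1)"
    using one_le_lmax_Xmat[of k1] by linarith
  have "c \<le> lmin (Umat k1 k2 \<beta>min)"
    unfolding c_def using Umin one_le_lmax_Xmat[of k1] by (simp add: divide_le_eq mult_le_cancel_left1)
  have "c * V \<le> c * (lmax (Xmat k1) * norm v^2)"
    unfolding V_def Xmat_def using Umin \<open>0 < lmax (Xmat k1)\<close> c_def
    by (intro mult_left_mono quadratic_form_le_lmax_blk) auto
  also have "\<dots> = lmin (Umat k1 k2 \<beta>min) * norm v^2"
    using \<open>0 < lmax (Xmat k1)\<close> by (simp add: c_def)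
  also have "\<dots> \<le> v \<bullet> (Umat k1 k2 \<beta>min *v v)"
    unfolding Umat_def by (rule lmin_blk_le_quadratic_form)
  finally have at_min: "c * V \<le> \<beta>min * Q1 - Q0"
    by (simp add: v Umat_form Q1_def Q0_def)
  have "c * V \<le> 2 * k1 * norm x^2 + 2 * k2 * norm (k1 *\<^sub>R x + y)^2"
    using \<open>c \<le> lmin (Umat k1 k2 \<beta>min)\<close> lmin_Umat_le[of k1 k2 \<beta>min] assms
    by (simp add: V_def v Xmat_form distrib_left add_mono mult_right_mono)
  then have at_one: "c * V \<le> Q1 - Q0"
    using Umat_one_form[of x y k1 k2] by (simp add: Umat_form Q1_def Q0_def)
  have "c * V \<le> \<beta> * Q1 - Q0"
  proof (cases "0 \<le> Q1")
    case True
    then show ?thesis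
      using at_min mult_right_mono[OF \<open>\<beta>min \<le> \<beta>\<close> True] by linarith
  next
    case False
    then show ?thesis
      using at_one mult_right_mono_neg[OF \<open>\<beta> \<le> 1\<close>, of Q1] by linarith
  qed
  then show ?thesis
    by (simp add: v c_def V_def Umat_form Q1_def Q0_def)
qed

lemma rho_theta_bounds:
  assumes "0 < k1" "0 < k2" "beta_crit k1 k2 < \<beta>min" "\<beta>min \<le> 1"
  shows "1 \<le> sqrt (lmax (Xmat k1) / lmin (Xmat k1))" "0 < lmin (Umat k1 k2 \<beta>min) / (2 * lmax (Xmat k1))"
  using lmin_Xmat_pos[of k1] lmin_Xmat_le_one[of k1] one_le_lmax_Xmat[of k1] lmin_Umat_pos[OF assms]
  by (simp_all add: le_divide_eq)

section \<open>Exponential decay along the closed loop\<close>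

lemma has_real_derivative_inner:
  fixes f g :: "real \<Rightarrow> 'a::real_inner"
  assumes "(f has_vector_derivative f') (at x within S)" "(g has_vector_derivative g') (at x within S)"
  shows "((\<lambda>t. f t \<bullet> g t) has_real_derivative f x \<bullet> g' + f' \<bullet> g x) (at x within S)"
  using has_derivative_inner[OF assms[unfolded has_vector_derivative_def]]
  unfolding has_field_derivative_def by (rule has_derivative_eq_rhs) (auto simp: algebra_simps)

lemma continuous_on_Icc_if_C1:
  fixes f :: "real \<Rightarrow> 'a::real_normed_vector"
  assumes "\<exists>f'. continuous_on {0..} f' \<and> (\<forall>t\<ge>0. (f has_vector_derivative f' t) (at t within {0..}))"
  shows "continuous_on {0..T} f"
proof -
  from assms obtain f' where "\<forall>t\<ge>0. (f has_vector_derivative f' t) (at t within {0..})"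
    by blast
  then have "continuous_on {0..} f"
    by (intro has_derivative_continuous_on) (auto simp: has_vector_derivative_def)
  then show ?thesis
    by (rule continuous_on_subset) auto
qed

lemma closed_loop_Xmat_form_deriv:
  assumes "(z1 has_vector_derivative z2 t) (at t within S)"
    and "(z2 has_vector_derivative - b *\<^sub>R ((1 + k1*k2) *\<^sub>R z1 t + (k1 + k2) *\<^sub>R z2 t)) (at t within S)"
  shows "((\<lambda>t. stack (z1 t) (z2 t) \<bullet> (Xmat k1 *v stack (z1 t) (z2 t))) has_real_derivative
          - (stack (z1 t) (z2 t) \<bullet> (Umat k1 k2 b *v stack (z1 t) (z2 t)))) (at t within S)"
proof -
  define z2' where "z2' = - b *\<^sub>R ((1 + k1*k2) *\<^sub>R z1 t + (k1 + k2) *\<^sub>R z2 t)"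
  have "((\<lambda>t. (1 + k1^2) * (z1 t \<bullet> z1 t) + 2 * k1 * (z1 t \<bullet> z2 t) + 1 * (z2 t \<bullet> z2 t)) has_real_derivative
      (1 + k1^2) * (z1 t \<bullet> z2 t + z2 t \<bullet> z1 t) + 2 * k1 * (z1 t \<bullet> z2' + z2 t \<bullet> z2 t)
      + 1 * (z2 t \<bullet> z2' + z2' \<bullet> z2 t)) (at t within S)"
    using assms unfolding z2'_def[symmetric]
    by (intro DERIV_add DERIV_cmult has_real_derivative_inner)
  then show ?thesis
    unfolding Xmat_def Umat_def inner_blk_mult_stack
    by (rule DERIV_cong)
      (simp add: z2'_def inner_add_left inner_add_right inner_commute power2_eq_square algebra_simps)
qed

lemma exp_decay_of_deriv_le_neg_mult:
  fixes V V' :: "real \<Rightarrow> real"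
  assumes deriv: "\<And>t. t \<in> {0..T} \<Longrightarrow> (V has_real_derivative V' t) (at t within {0..T})"
    and bound: "\<And>t. t \<in> {0..T} \<Longrightarrow> V' t \<le> - c * V t"
    and t: "t \<in> {0..T}"
  shows "V t \<le> V 0 * exp (- c * t)"
proof -
  have "V t * exp (c * t) \<le> V 0 * exp (c * 0)"
  proof (rule DERIV_nonpos_imp_decreasing_open[of 0 t "\<lambda>s. V s * exp (c * s)"])
    show "0 \<le> t"
      using t by simp
    have "continuous_on {0..T} V"
      using deriv by (intro has_derivative_continuous_on) (auto simp: has_field_derivative_def)
    then show "continuous_on {0..t} (\<lambda>s. V s * exp (c * s))"
      using t by (intro continuous_intros) (auto elim: continuous_on_subset)
  next
    fix s assume s: "0 < s" "s < t"
    then have "s \<in> {0..T}" and "at s within {0..T} = at s"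
      using t by (auto intro: at_within_Icc_at)
    then have "(V has_real_derivative V' s) (at s)"
      using deriv by metis
    then have "((\<lambda>s. V s * exp (c * s)) has_real_derivative (V' s + c * V s) * exp (c * s)) (at s)"
      by (auto intro!: derivative_eq_intros simp: algebra_simps)
    moreover have "(V' s + c * V s) * exp (c * s) \<le> 0"
      using bound[OF \<open>s \<in> {0..T}\<close>] by (simp add: mult_nonpos_nonneg)
    ultimately show "\<exists>y. ((\<lambda>s. V s * exp (c * s)) has_real_derivative y) (at s) \<and> y \<le> 0"
      by blast
  qed
  then have "V t * exp (c * t) * exp (- c * t) \<le> V 0 * exp (- c * t)"
    by simp
  then show ?thesis
    by (simp add: mult.assoc flip: exp_add)
qed

lemma closed_loop_norm_z1_le:
  assumes k1: "0 < k1" and k2: "0 < k2" and bmin: "beta_crit k1 k2 < \<beta>min" "\<beta>min \<le> 1"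
    and beta: "\<And>t. t \<in> {0..ts} \<Longrightarrow> \<beta>min \<le> \<beta> t \<and> \<beta> t \<le> 1"
    and ode1: "\<And>t. t \<in> {0..ts} \<Longrightarrow> (z1 has_vector_derivative z2 t) (at t within {0..ts})"
    and ode2: "\<And>t. t \<in> {0..ts} \<Longrightarrow>
      (z2 has_vector_derivative - \<beta> t *\<^sub>R ((1 + k1*k2) *\<^sub>R z1 t + (k1 + k2) *\<^sub>R z2 t)) (at t within {0..ts})"
    and t: "t \<in> {0..ts}"
  shows "norm (z1 t) \<le> sqrt (lmax (Xmat k1) / lmin (Xmat k1)) * norm (stack (z1 0) (z2 0))
           * exp (- (lmin (Umat k1 k2 \<beta>min) / (2 * lmax (Xmat k1))) * t)"
proof -
  define \<theta> where "\<theta> = lmin (Umat k1 k2 \<beta>min) / (2 * lmax (Xmat k1))"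
  define V where "V s = stack (z1 s) (z2 s) \<bullet> (Xmat k1 *v stack (z1 s) (z2 s))" for s
  define s0 where "s0 = norm (stack (z1 0) (z2 0))"
  have "V 0 \<le> lmax (Xmat k1) * s0^2"
    unfolding V_def s0_def Xmat_def by (rule quadratic_form_le_lmax_blk)
  also have "\<dots> \<le> lmax (Xmat k1) / lmin (Xmat k1) * s0^2"
    using lmin_Xmat_pos[of k1] lmin_Xmat_le_one[of k1] one_le_lmax_Xmat[of k1]
    by (intro mult_right_mono) (simp_all add: le_divide_eq mult_le_cancel_left1)
  finally have V0: "V 0 \<le> lmax (Xmat k1) / lmin (Xmat k1) * s0^2" .
  have "norm (z1 t)^2 \<le> V t"
    unfolding V_def Xmat_form by simp
  also have "V t \<le> V 0 * exp (- (2 * \<theta>) * t)"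
  proof (rule exp_decay_of_deriv_le_neg_mult[OF _ _ t])
    fix s assume "s \<in> {0..ts}"
    then show "(V has_real_derivative - (stack (z1 s) (z2 s) \<bullet> (Umat k1 k2 (\<beta> s) *v stack (z1 s) (z2 s))))
        (at s within {0..ts})"
      unfolding V_def by (intro closed_loop_Xmat_form_deriv ode1 ode2)
    show "- (stack (z1 s) (z2 s) \<bullet> (Umat k1 k2 (\<beta> s) *v stack (z1 s) (z2 s))) \<le> - (2 * \<theta>) * V s"
      using Umat_form_ge_Xmat_form[OF k1 k2 bmin(1)] beta[OF \<open>s \<in> {0..ts}\<close>]
      unfolding \<theta>_def V_def by simp
  qed
  also have "\<dots> \<le> lmax (Xmat k1) / lmin (Xmat k1) * s0^2 * exp (- (2 * \<theta>) * t)"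
    using V0 by (rule mult_right_mono) simp
  also have "\<dots> = (sqrt (lmax (Xmat k1) / lmin (Xmat k1)) * s0 * exp (- \<theta> * t))^2"
    using lmin_Xmat_pos[of k1] one_le_lmax_Xmat[of k1]
    by (simp add: power_mult_distrib flip: exp_of_nat_mult)
  finally have "norm (z1 t)^2 \<le> (sqrt (lmax (Xmat k1) / lmin (Xmat k1)) * s0 * exp (- \<theta> * t))^2" .
  moreover have "0 \<le> sqrt (lmax (Xmat k1) / lmin (Xmat k1)) * s0 * exp (- \<theta> * t)"
    using lmin_Xmat_pos[of k1] one_le_lmax_Xmat[of k1] by (simp add: s0_def)
  ultimately show ?thesis
    unfolding s0_def \<theta>_def by (rule power2_le_imp_le)
qed

section \<open>Bounding the gravitational perturbation\<close>

lemma inverse_cube_convex_midpoint: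
  fixes W \<delta> :: real
  assumes "0 \<le> \<delta>" "\<delta> < W"
  shows "1 / W^3 - 1 / (W + \<delta>)^3 \<le> 1 / (W - \<delta>)^3 - 1 / W^3"
proof -
  have pos: "0 < W - \<delta>" "0 < W + \<delta>" "0 < W"
    using assms by auto
  have "\<delta> * \<delta> \<le> W * W"
    using assms by (intro mult_mono) auto
  then have "((W - \<delta>) * (W + \<delta>))^3 \<le> (W^2)^3"
    by (intro power_mono) (auto simp: power2_eq_square algebra_simps)
  moreover have "(W^2)^3 \<le> W^3 * ((W - \<delta>)^3 + (W + \<delta>)^3) / 2"
  proof -
    have "(W - \<delta>)^3 + (W + \<delta>)^3 = 2 * W^3 + 6 * W * \<delta>^2"
      by (simp add: power3_eq_cube power2_eq_square algebra_simps)
    with pos show ?thesis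
      by (simp add: power3_eq_cube power2_eq_square algebra_simps)
  qed
  ultimately have "2 * ((W - \<delta>)^3 * (W + \<delta>)^3) \<le> W^3 * ((W - \<delta>)^3 + (W + \<delta>)^3)"
    by (simp add: power_mult_distrib)
  with pos have "2 / W^3 \<le> ((W - \<delta>)^3 + (W + \<delta>)^3) / ((W - \<delta>)^3 * (W + \<delta>)^3)"
    by (simp add: divide_le_eq le_divide_eq mult.commute)
  also have "\<dots> = 1 / (W - \<delta>)^3 + 1 / (W + \<delta>)^3"
    using pos by (simp add: field_simps)
  finally show ?thesis
    by simp
qed

lemma norm_inverse_cube_diff_le:
  fixes w z :: "'a::real_normed_vector"
  assumes z: "norm z \<le> \<delta>" and w: "\<delta> < norm w"
  shows "norm ((1 / norm (w - z)^3) *\<^sub>R (w - z) - (1 / norm w^3) *\<^sub>R w)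
           \<le> norm w * (1 / (norm w - \<delta>)^3 - 1 / norm w^3) + \<delta> / (norm w - \<delta>)^3"
proof -
  define W d where "W = norm w" and "d = norm (w - z)"
  have "0 \<le> \<delta>"
    using z norm_ge_zero order_trans by blast
  have "W - \<delta> \<le> d" "d \<le> W + \<delta>"
    using z norm_triangle_ineq2[of w z] norm_triangle_ineq4[of w z] unfolding W_def d_def by auto
  moreover have "0 < W - \<delta>"
    using w unfolding W_def by simp
  ultimately have upper: "1 / d^3 \<le> 1 / (W - \<delta>)^3" and lower: "1 / (W + \<delta>)^3 \<le> 1 / d^3"
    by (auto intro!: divide_left_mono power_mono mult_pos_pos)
  have diff: "\<bar>1 / d^3 - 1 / W^3\<bar> \<le> 1 / (W - \<delta>)^3 - 1 / W^3"
    using upper lower inverse_cube_convex_midpoint[OF \<open>0 \<le> \<delta>\<close>, of W] w unfolding W_def abs_le_iff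
    by auto
  have "(1 / d^3) *\<^sub>R (w - z) - (1 / W^3) *\<^sub>R w = (1 / d^3 - 1 / W^3) *\<^sub>R w - (1 / d^3) *\<^sub>R z"
    by (simp add: algebra_simps)
  then have "norm ((1 / d^3) *\<^sub>R (w - z) - (1 / W^3) *\<^sub>R w) \<le> \<bar>1 / d^3 - 1 / W^3\<bar> * W + 1 / d^3 * norm z"
    using norm_triangle_ineq4[of "(1 / d^3 - 1 / W^3) *\<^sub>R w" "(1 / d^3) *\<^sub>R z"]
    by (simp add: W_def d_def)
  also have "\<dots> \<le> (1 / (W - \<delta>)^3 - 1 / W^3) * W + 1 / (W - \<delta>)^3 * \<delta>"
    using diff upper z \<open>0 < W - \<delta>\<close>
    by (intro add_mono mult_mono) (auto simp: W_def)
  finally show ?thesis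
    by (simp add: W_def d_def algebra_simps)
qed

lemma norm_fa_le_psi_sum:
  assumes mu: "\<forall>j\<in>{1..P}. \<mu> j > 0"
    and z: "norm z \<le> \<rho> * s * exp (- \<theta> * t)"
    and gap: "\<forall>j\<in>{1..P}. \<rho> * s * exp (- \<theta> * t) < norm (w j t)"
  shows "norm (fa P \<mu> w t z) \<le> (\<Sum>j=1..P. \<mu> j * psi w \<rho> \<theta> j s t)"
proof -
  define \<delta> where "\<delta> = \<rho> * s * exp (- \<theta> * t)"
  have "0 \<le> \<delta>"
    using z unfolding \<delta>_def by (meson norm_ge_zero order_trans)
  have summand_le: "norm ((1 / norm (w j t - z)^3) *\<^sub>R (w j t - z) - (1 / norm (w j t)^3) *\<^sub>R w j t)
      \<le> psi w \<rho> \<theta> j s t" if j: "j \<in> {1..P}" for j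
  proof -
    have "\<delta> < norm (w j t)"
      using gap j unfolding \<delta>_def by blast
    then have "0 \<le> 1 / (norm (w j t) - \<delta>)^3 - 1 / norm (w j t)^3"
      using \<open>0 \<le> \<delta>\<close> by (auto intro!: divide_left_mono power_mono mult_pos_pos)
    moreover have "norm (w j t) \<le> norm1 (w j t)"
      unfolding norm1_def by (rule norm_le_l1_cart)
    moreover have "\<delta> / (norm (w j t) - \<delta>)^3 \<le> sqrt 3 * \<delta> / (norm (w j t) - \<delta>)^3"
      using \<open>0 \<le> \<delta>\<close> \<open>\<delta> < norm (w j t)\<close> by (intro divide_right_mono) (auto simp: mult_le_cancel_right1)
    moreover have "psi w \<rho> \<theta> j s t = norm1 (w j t) * (1 / (norm (w j t) - \<delta>)^3 - 1 / norm (w j t)^3)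
        + sqrt 3 * \<delta> / (norm (w j t) - \<delta>)^3"
      by (simp add: psi_def \<delta>_def right_diff_distrib mult.assoc)
    ultimately have "norm (w j t) * (1 / (norm (w j t) - \<delta>)^3 - 1 / norm (w j t)^3) + \<delta> / (norm (w j t) - \<delta>)^3
        \<le> psi w \<rho> \<theta> j s t"
      by (simp add: add_mono mult_right_mono)
    then show ?thesis
      using norm_inverse_cube_diff_le[OF z[folded \<delta>_def] \<open>\<delta> < norm (w j t)\<close>] by linarith
  qed
  have "norm (fa P \<mu> w t z) \<le> (\<Sum>j=1..P. norm (\<mu> j *\<^sub>R ((1 / norm (w j t - z)^3) *\<^sub>R (w j t - z)
      - (1 / norm (w j t)^3) *\<^sub>R w j t)))"
    unfolding fa_def by (rule norm_sum)
  also have "\<dots> \<le> (\<Sum>j=1..P. \<mu> j * psi w \<rho> \<theta> j s t)"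
  proof (rule sum_mono)
    fix j assume "j \<in> {1..P}"
    with mu summand_le show "norm (\<mu> j *\<^sub>R ((1 / norm (w j t - z)^3) *\<^sub>R (w j t - z)
        - (1 / norm (w j t)^3) *\<^sub>R w j t)) \<le> \<mu> j * psi w \<rho> \<theta> j s t"
      by (simp add: mult_left_mono less_imp_le)
  qed
  finally show ?thesis .
qed

lemma psi_sum_le_phi:
  assumes cont: "\<forall>j\<in>{1..P}. continuous_on {0..ts} (w j)"
    and pos: "0 \<le> \<rho> * s"
    and gap: "\<forall>j\<in>{1..P}. \<forall>t\<in>{0..ts}. \<rho> * s * exp (- \<theta> * t) < norm (w j t)"
    and t: "t \<in> {0..ts}"
  shows "(\<Sum>j=1..P. \<mu> j * psi w \<rho> \<theta> j s t) \<le> phi P \<mu> w \<rho> \<theta> ts s"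
proof -
  have "continuous_on {0..ts} (\<lambda>t. psi w \<rho> \<theta> j s t)" if j: "j \<in> {1..P}" for j
  proof -
    have "\<forall>t\<in>{0..ts}. 0 < norm (w j t) - \<rho> * s * exp (- \<theta> * t) \<and> 0 < norm (w j t)"
    proof
      fix t assume "t \<in> {0..ts}"
      with gap j have "\<rho> * s * exp (- \<theta> * t) < norm (w j t)"
        by blast
      moreover have "0 \<le> \<rho> * s * exp (- \<theta> * t)"
        using pos by simp
      ultimately show "0 < norm (w j t) - \<rho> * s * exp (- \<theta> * t) \<and> 0 < norm (w j t)"
        by auto
    qed
    then show ?thesis
      unfolding psi_def norm1_def using cont j
      by (intro continuous_intros continuous_on_component) auto
  qed
  then have "continuous_on {0..ts} (\<lambda>t. \<Sum>j=1..P. \<mu> j * psi w \<rho> \<theta> j s t)"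
    by (intro continuous_intros) auto
  then have "bdd_above ((\<lambda>t. \<Sum>j=1..P. \<mu> j * psi w \<rho> \<theta> j s t) ` {0..ts})"
    by (intro bounded_imp_bdd_above compact_imp_bounded compact_continuous_image) auto
  with t show ?thesis
    unfolding phi_def by (rule cSUP_upper)
qed

lemma envelope_lt_distance:
  assumes "0 \<le> \<rho> * s" "0 \<le> \<theta>" "\<rho> * s < Inf ((\<lambda>(j, t). norm (w j t)) ` ({1..P} \<times> {0..ts}))"
  shows "\<forall>j\<in>{1..P}. \<forall>t\<in>{0..ts}. \<rho> * s * exp (- \<theta> * t) < norm (w j t)"
proof (intro ballI)
  fix j t assume j: "j \<in> {1..P}" and t: "t \<in> {0..ts}"
  have "\<rho> * s * exp (- \<theta> * t) \<le> \<rho> * s"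
    using assms(1,2) t by (simp add: mult_left_le)
  also have "\<dots> < Inf ((\<lambda>(j, t). norm (w j t)) ` ({1..P} \<times> {0..ts}))"
    by (rule assms(3))
  also have "\<dots> \<le> norm (w j t)"
    using j t by (intro cInf_lower bdd_belowI[of _ 0]) force+
  finally show "\<rho> * s * exp (- \<theta> * t) < norm (w j t)" .
qed

theorem mainTheorem7:
  fixes P :: nat and \<mu> :: "nat \<Rightarrow> real" and rr :: "nat \<Rightarrow> real \<Rightarrow> real^3"
    and rstar :: "real \<Rightarrow> real^3"
    and k1 k2 \<beta>min ts :: real and \<beta> :: "real \<Rightarrow> real"
    and z1 z2 :: "real \<Rightarrow> real^3"
    and w :: "nat \<Rightarrow> real \<Rightarrow> real^3" and u :: "real \<Rightarrow> real^3"
    and \<rho> \<theta> r :: real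
  assumes P: "P \<ge> 1"
    and mu: "\<forall>j\<in>{1..P}. \<mu> j > 0"
    and rr_C1: "\<forall>j\<in>{1..P}. \<exists>r'. continuous_on {0..} r' \<and>
                  (\<forall>t\<ge>0. (rr j has_vector_derivative r' t) (at t within {0..}))"
    and rr1: "\<forall>t\<ge>0. rr 1 t = 0"
    and rstar_C1: "\<exists>r'. continuous_on {0..} r' \<and>
                  (\<forall>t\<ge>0. (rstar has_vector_derivative r' t) (at t within {0..}))"
    and rstar_ne: "\<forall>t\<ge>0. \<forall>j\<in>{1..P}. rstar t \<noteq> rr j t"
    and w_def: "w \<equiv> (\<lambda>j t. rr j t - rstar t)"
    and k1: "k1 > 0" and k2: "k2 > 0"
    and bmin: "beta_crit k1 k2 < \<beta>min" "\<beta>min \<le> 1"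
    and beta_cont: "continuous_on {0..} \<beta>"
    and beta_rng: "\<forall>t\<ge>0. \<beta>min \<le> \<beta> t \<and> \<beta> t \<le> 1"
    and u_def: "u \<equiv> (\<lambda>t. - \<beta> t *\<^sub>R ((1 + k1*k2) *\<^sub>R z1 t + (k1 + k2) *\<^sub>R z2 t)
                          - fa P \<mu> w t (z1 t))"
    and ts: "ts > 0"
    and ode1: "\<forall>t\<in>{0..ts}. (z1 has_vector_derivative z2 t) (at t within {0..ts})"
    and ode2: "\<forall>t\<in>{0..ts}. (z2 has_vector_derivative (fa P \<mu> w t (z1 t) + u t))
                              (at t within {0..ts})"
    and rho_def: "\<rho> \<equiv> sqrt (lmax (Xmat k1) / lmin (Xmat k1))"
    and theta_def: "\<theta> \<equiv> lmin (Umat k1 k2 \<beta>min) / (2 * lmax (Xmat k1))"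
    and r_def: "r \<equiv> Inf ((\<lambda>(j, t). norm (w j t)) ` ({1..P} \<times> {0..ts}))"
    and z0B: "\<rho> * norm (stack (z1 0) (z2 0)) < r"
  shows "stack (z1 0) (z2 0) \<bullet> (Xmat k1 *v stack (z1 0) (z2 0)) < lmin (Xmat k1) * r^2
    \<and> (\<forall>t\<in>{0..ts}. (\<forall>j\<in>{1..P}. z1 t \<noteq> w j t)
        \<and> norm (fa P \<mu> w t (z1 t))
            \<le> (\<Sum>j=1..P. \<mu> j * psi w \<rho> \<theta> j (norm (stack (z1 0) (z2 0))) t)
        \<and> (\<Sum>j=1..P. \<mu> j * psi w \<rho> \<theta> j (norm (stack (z1 0) (z2 0))) t)
            \<le> phi P \<mu> w \<rho> \<theta> ts (norm (stack (z1 0) (z2 0))))"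
proof -
  define s where "s = norm (stack (z1 0) (z2 0))"
  have "1 \<le> \<rho>" "0 < \<theta>"
    unfolding rho_def theta_def by (rule rho_theta_bounds[OF k1 k2 bmin])+
  have closed_loop: "\<forall>t\<in>{0..ts}. (z2 has_vector_derivative
      - \<beta> t *\<^sub>R ((1 + k1*k2) *\<^sub>R z1 t + (k1 + k2) *\<^sub>R z2 t)) (at t within {0..ts})"
    using ode2 by (simp add: u_def)
  have z1_le: "norm (z1 t) \<le> \<rho> * s * exp (- \<theta> * t)" if "t \<in> {0..ts}" for t
    unfolding rho_def theta_def s_def
    by (rule closed_loop_norm_z1_le[OF k1 k2 bmin _ _ _ that, where \<beta> = \<beta>])
      (use beta_rng ode1 closed_loop in auto)
  have gap: "\<forall>j\<in>{1..P}. \<forall>t\<in>{0..ts}. \<rho> * s * exp (- \<theta> * t) < norm (w j t)"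
    using \<open>1 \<le> \<rho>\<close> \<open>0 < \<theta>\<close> z0B unfolding s_def r_def by (intro envelope_lt_distance) auto
  have cont: "\<forall>j\<in>{1..P}. continuous_on {0..ts} (w j)"
    using continuous_on_Icc_if_C1[OF bspec[OF rr_C1]] continuous_on_Icc_if_C1[OF rstar_C1]
    unfolding w_def by (auto intro!: continuous_on_diff)
  show ?thesis
    unfolding s_def[symmetric]
  proof (intro conjI ballI)
    show "stack (z1 0) (z2 0) \<bullet> (Xmat k1 *v stack (z1 0) (z2 0)) < lmin (Xmat k1) * r^2"
      using z0B unfolding rho_def by (rule Xmat_form_less)
    fix t assume t: "t \<in> {0..ts}"
    show "z1 t \<noteq> w j t" if "j \<in> {1..P}" for j
      using z1_le[OF t] gap that t by fastforce
    show "norm (fa P \<mu> w t (z1 t)) \<le> (\<Sum>j=1..P. \<mu> j * psi w \<rho> \<theta> j s t)"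
      using mu z1_le[OF t] gap t by (intro norm_fa_le_psi_sum) auto
    show "(\<Sum>j=1..P. \<mu> j * psi w \<rho> \<theta> j s t) \<le> phi P \<mu> w \<rho> \<theta> ts s"
      using cont gap t \<open>1 \<le> \<rho>\<close> by (intro psi_sum_le_phi) (auto simp: s_def)
  qed
qed

end
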